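(* Let $\sigma\ge 2$, $k\ge 1$, let $U$ be any rotation of a $\sigma$-ary de Bruijn cycle of order $k$, and let $w_{\mathrm{lin}}=U\,U[0..k-2]$. Let $\chi$ be the size of a smallest suffixient set for $w_{\mathrm{lin}}\$$ and $r$ the number of runs of $\operatorname{BWT}(w_{\mathrm{lin}}\$)$. Then $$\frac{\chi}{r}<\frac{\sigma}{\sigma-1}.$$
   Context: A $\sigma$-ary de Bruijn cycle of order $k$ is a cyclic word of length $\sigma^k$ over an ordered alphabet $\Sigma$ of size $\sigma$ in which every word of $\Sigma^k$ occurs exactly once as a cyclic length-$k$ window. Strings are $0$-indexed; $v[0..j]$ is the prefix ending at position $j$. $\$\notin\Sigma$ is an end-marker smaller than all letters, appended once. $\operatorname{BWT}(v)$ is the last column of the matrix of lexicographically sorted cyclic rotations of $v$; a run is a maximal block of one repeated symbol. For a string $v$ over $\Sigma\cup\{\$\}$, a substring $x$ (possibly empty) is right-maximal if $xa,xb$ are substrings of $v$ for two distinct symbols $a\ne b$; these words $xa$ are the right-extensions of $v$. A set $S$ of positions of $v$ is suffixient if every right-extension of $v$ is a suffix of $v[0..j]$ for some $j\in S$. *)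

theory Defs
  imports Complex_Main "HOL-Library.Option_ord" "HOL-Library.List_Lexorder" "HOL-Library.Sublist"
begin

(* Alphabet Sigma: a finite subset of a linearly ordered type 'a.
   Strings over Sigma \<union> {$} are lists over 'a option, with $ = None,
   which is smaller than every letter Some a (Option_ord). *)

definition cyc_window :: "'a list \<Rightarrow> nat \<Rightarrow> nat \<Rightarrow> 'a list" where
  "cyc_window U i k = map (\<lambda>j. U ! ((i + j) mod length U)) [0..<k]"

definition de_bruijn_cycle :: "'a set \<Rightarrow> nat \<Rightarrow> 'a list \<Rightarrow> bool" where
  "de_bruijn_cycle \<Sigma> k U \<longleftrightarrow>
     length U = card \<Sigma> ^ k \<and> set U \<subseteq> \<Sigma> \<and>
     (\<forall>x. length x = k \<and> set x \<subseteq> \<Sigma> \<longrightarrow>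
        card {i. i < length U \<and> cyc_window U i k = x} = 1)"

definition BWT :: "'b::linorder list \<Rightarrow> 'b list" where
  "BWT v = map last (sort (map (\<lambda>i. rotate i v) [0..<length v]))"

definition runs :: "'b list \<Rightarrow> nat" where
  "runs xs = length (remdups_adj xs)"

definition right_maximal :: "'b list \<Rightarrow> 'b list \<Rightarrow> bool" where
  "right_maximal v x \<longleftrightarrow> (\<exists>a b. a \<noteq> b \<and> sublist (x @ [a]) v \<and> sublist (x @ [b]) v)"

definition right_extensions :: "'b list \<Rightarrow> 'b list set" where
  "right_extensions v = {x @ [a] | x a. right_maximal v x \<and> sublist (x @ [a]) v}"

definition suffixient :: "'b list \<Rightarrow> nat set \<Rightarrow> bool" where
  "suffixient v S \<longleftrightarrow> S \<subseteq> {..<length v} \<and>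
     (\<forall>e \<in> right_extensions v. \<exists>j \<in> S. suffix e (take (Suc j) v))"

definition chi :: "'b list \<Rightarrow> nat" where
  "chi v = Min {card S | S. suffixient v S}"

end

theory Submission
  imports Defs
begin

(* Write v for w_lin $ and L = sigma^k. Since w_lin ends with a copy of its first k - 1
   letters, every right-extension ending before position k - 1 also ends L positions later,
   so the L + 1 positions k - 1, ..., |v| - 1 are suffixient and chi <= L + 1.
   The rows of the BWT matrix are sorted, hence grouped by their first k - 1 symbols.
   In the de Bruijn cycle every y in Sigma^(k-1) is preceded by each of the sigma letters,
   so the group of rows beginning with y ends in sigma distinct letters and contributes
   sigma - 1 run boundaries: r >= L - L / sigma + 1.
   Finally (L + 1) / (L - L / sigma + 1) < sigma / (sigma - 1). *)

lemma runs_Cons_Cons: "runs (a # b # xs) = runs (b # xs) + (if a = b then 0 else 1)"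
  unfolding runs_def by simp

lemma card_add_one_le_runs_snd:
  assumes "sorted (map fst ps)" and "B \<subseteq> set ps" and "ps \<noteq> []"
  shows "card B + 1 \<le> runs (map snd ps) + card (fst ` B)"
  using assms
proof (induction ps arbitrary: B)
  case Nil
  then show ?case by simp
next
  case (Cons p qs)
  show ?case
  proof (cases "qs = []")
    case True
    then have "B = {} \<or> B = {p}" using Cons.prems(2) by auto
    then show ?thesis using True by (auto simp: runs_def)
  next
    case False
    then obtain q qs' where qs: "qs = q # qs'" by (cases qs) auto
    have sorted_qs: "sorted (map fst qs)" using Cons.prems(1) by simp
    have runs_eq: "runs (map snd (p # qs)) = runs (map snd qs) + (if snd p = snd q then 0 else 1)"
      unfolding qs by (simp add: runs_Cons_Cons)
    show ?thesis
    proof (cases "p \<in> B \<and> p \<notin> set qs")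
      case False
      then have "B \<subseteq> set qs" using Cons.prems(2) by auto
      then have "card B + 1 \<le> runs (map snd qs) + card (fst ` B)"
        using Cons.IH[OF sorted_qs] qs by blast
      then show ?thesis using runs_eq by simp
    next
      case True
      define B' where "B' = B - {p}"
      have B': "B' \<subseteq> set qs" "B = insert p B'" "p \<notin> B'"
        using True Cons.prems(2) by (auto simp: B'_def)
      have fin: "finite B'" using B'(1) finite_subset by blast
      have IH: "card B' + 1 \<le> runs (map snd qs) + card (fst ` B')"
        using Cons.IH[OF sorted_qs B'(1)] qs by blast
      have card_B: "card B = card B' + 1" using B'(2,3) fin by simp
      show ?thesis
      proof (cases "fst p \<in> fst ` B'")
        case False
        then have "card (fst ` B) = card (fst ` B') + 1" using B'(2) fin by simp
        then show ?thesis using IH card_B runs_eq by simp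
      next
        case fst_p: True
        then obtain p' where p': "p' \<in> set qs" "fst p' = fst p" using B'(1) by auto
        have "fst p \<le> fst q" and "fst q \<le> fst p'"
          using Cons.prems(1) sorted_qs p'(1) unfolding qs by auto
        then have "fst q = fst p" using p'(2) by simp
        moreover have "q \<noteq> p" using True unfolding qs by auto
        ultimately have "snd p \<noteq> snd q" by (metis prod.expand)
        moreover have "fst ` B = fst ` B'" using fst_p B'(2) by auto
        ultimately show ?thesis using IH card_B runs_eq by simp
      qed
    qed
  qed
qed

lemma take_mono_lexorder: "(xs :: 'b::linorder list) \<le> ys \<Longrightarrow> take n xs \<le> take n ys"
proof (induction n arbitrary: xs ys)
  case 0
  then show ?case by simp
next
  case (Suc n)
  show ?case
  proof (cases xs)
    case Nil
    then show ?thesis by simp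
  next
    case (Cons a as)
    then obtain b bs where "ys = b # bs" using Suc.prems by (cases ys) auto
    then show ?thesis using Suc Cons by (auto simp: order_le_less)
  qed
qed

text \<open>Rows of the BWT matrix sharing their first \<open>n\<close> symbols are consecutive, so a context
  preceded by \<open>d\<close> distinct letters forces \<open>d - 1\<close> run boundaries.\<close>

lemma card_add_one_le_runs_BWT:
  fixes v :: "'b::linorder list"
  assumes "v \<noteq> []"
    and "B \<subseteq> (\<lambda>i. (take n (rotate i v), last (rotate i v))) ` {..<length v}"
  shows "card B + 1 \<le> runs (BWT v) + card (fst ` B)"
proof -
  define rows where "rows = sort (map (\<lambda>i. rotate i v) [0..<length v])"
  define ps where "ps = map (\<lambda>r. (take n r, last r)) rows"
  have "sorted rows" unfolding rows_def by simp
  then have "sorted_wrt (\<lambda>r s. take n r \<le> take n s) rows"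
    by (rule sorted_wrt_mono_rel[rotated]) (auto intro: take_mono_lexorder)
  then have "sorted (map fst ps)" unfolding ps_def by (simp add: sorted_map)
  moreover have "set ps = (\<lambda>i. (take n (rotate i v), last (rotate i v))) ` {..<length v}"
    unfolding ps_def rows_def lessThan_atLeast0 by (simp add: image_image)
  then have "B \<subseteq> set ps" using assms(2) by simp
  moreover have "length ps = length v" unfolding ps_def rows_def by simp
  then have "ps \<noteq> []" using assms(1) by auto
  ultimately have "card B + 1 \<le> runs (map snd ps) + card (fst ` B)"
    by (rule card_add_one_le_runs_snd)
  moreover have "BWT v = map snd ps" unfolding BWT_def ps_def rows_def by simp
  ultimately show ?thesis by simp
qed

lemma rotate_Suc_if_drop_eq_Cons:
  assumes "drop i v = a # ys"
  shows "rotate (Suc i) v = ys @ take i v @ [a]"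
proof -
  have "i < length v" using assms by (cases "i < length v") auto
  then have "length (take i v @ [a]) = Suc i" by simp
  moreover have "v = (take i v @ [a]) @ ys"
    using append_take_drop_id[of i v] unfolding assms by simp
  ultimately show ?thesis using rotate_append by metis
qed

lemma cyc_window_rotate:
  assumes "D \<noteq> []"
  shows "cyc_window (rotate m D) i k = cyc_window D (m + i) k"
proof -
  have "rotate m D ! ((i + j) mod length D) = D ! ((m + i + j) mod length D)" for j
    using assms by (simp add: nth_rotate mod_add_left_eq mod_add_right_eq add.commute add.left_commute)
  then show ?thesis unfolding cyc_window_def by simp
qed

lemma cyc_window_mod: "cyc_window D (i mod length D) k = cyc_window D i k"
  unfolding cyc_window_def by (simp add: mod_add_left_eq)

lemma ex_cyc_window_rotate:
  assumes "i < length D"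
  shows "\<exists>i' < length D. cyc_window (rotate m D) i' k = cyc_window D i k"
proof -
  define L where "L = length D"
  have "L > 0" using assms unfolding L_def by linarith
  define i' where "i' = (i + (L - 1) * m) mod L"
  have eq: "m + (i + (L - 1) * m) = i + L * m"
    using \<open>L > 0\<close> by (cases L) (simp_all add: algebra_simps)
  have "(m + i') mod L = i"
    unfolding i'_def mod_add_right_eq eq using assms unfolding L_def by simp
  then have "cyc_window D (m + i') k = cyc_window D i k"
    using cyc_window_mod[of D "m + i'"] unfolding L_def by (simp only:)
  moreover have "i' < L" using \<open>L > 0\<close> unfolding i'_def by simp
  ultimately show ?thesis using cyc_window_rotate[of D m i' k] \<open>L > 0\<close> unfolding L_def by auto
qed

lemma take_drop_append_take_eq_cyc_window:
  assumes "i < length U" and "k \<le> Suc (length U)"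
  shows "take k (drop i (U @ take (k - 1) U)) = cyc_window U i k"
proof -
  define W where "W = U @ take (k - 1) U"
  have "length (take k (drop i W)) = k" using assms unfolding W_def by simp
  moreover have "take k (drop i W) ! j = cyc_window U i k ! j" if j: "j < k" for j
  proof -
    have "i \<le> length W" using assms unfolding W_def by simp
    then have "take k (drop i W) ! j = W ! (i + j)" using j by simp
    also have "\<dots> = U ! ((i + j) mod length U)"
    proof (cases "i + j < length U")
      case True
      then show ?thesis unfolding W_def by (simp add: nth_append)
    next
      case False
      then have "(i + j) mod length U = i + j - length U"
        using assms j by (simp add: le_mod_geq)
      then show ?thesis using False assms j unfolding W_def by (simp add: nth_append)
    qed
    also have "\<dots> = cyc_window U i k ! j" using j by (simp add: cyc_window_def)
    finally show ?thesis .
  qed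
  ultimately have "take k (drop i W) = cyc_window U i k"
    by (intro nth_equalityI) (simp_all add: cyc_window_def)
  then show ?thesis unfolding W_def .
qed

lemma de_bruijn_cycle_ex_cyc_window:
  assumes "de_bruijn_cycle \<Sigma> k D" and "length x = k" and "set x \<subseteq> \<Sigma>"
  shows "\<exists>i < length D. cyc_window D i k = x"
proof -
  have "card {i. i < length D \<and> cyc_window D i k = x} = 1"
    using assms unfolding de_bruijn_cycle_def by blast
  then obtain i where "{i. i < length D \<and> cyc_window D i k = x} = {i}"
    by (rule card_1_singletonE)
  then show ?thesis by blast
qed

lemma de_bruijn_context_in_BWT_rows:
  assumes db: "de_bruijn_cycle \<Sigma> k D" and "1 \<le> k" and "k \<le> length D"
    and v: "v = map Some (rotate m D @ take (k - 1) (rotate m D)) @ [None]"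
    and y: "set y \<subseteq> \<Sigma>" "length y = k - 1" and a: "a \<in> \<Sigma>"
  shows "\<exists>i < length v. take (k - 1) (rotate i v) = map Some y \<and> last (rotate i v) = Some a"
proof -
  define U where "U = rotate m D"
  define w where "w = U @ take (k - 1) U"
  obtain i where i: "i < length D" "cyc_window D i k = a # y"
    using de_bruijn_cycle_ex_cyc_window[OF db, of "a # y"] y a \<open>1 \<le> k\<close> by auto
  obtain i' where i': "i' < length U" "cyc_window U i' k = a # y"
    using ex_cyc_window_rotate[OF i(1), of m k] i(2) unfolding U_def by auto
  have "take k (drop i' w) = a # y"
    using take_drop_append_take_eq_cyc_window[OF i'(1)] i'(2) assms(3) unfolding w_def U_def by simp
  then obtain rest where "drop i' w = a # y @ rest"
    using append_take_drop_id[of k "drop i' w"] by (metis append_Cons)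
  moreover have "drop i' v = map Some (drop i' w) @ [None]"
    using i'(1) unfolding v w_def U_def by (simp add: drop_map)
  ultimately have "drop i' v = Some a # (map Some y @ map Some rest @ [None])" by simp
  then have "rotate (Suc i') v = (map Some y @ map Some rest @ [None]) @ take i' v @ [Some a]"
    by (rule rotate_Suc_if_drop_eq_Cons)
  then have "take (k - 1) (rotate (Suc i') v) = map Some y \<and> last (rotate (Suc i') v) = Some a"
    using y(2) by simp
  moreover have "Suc i' < length v" using i'(1) \<open>1 \<le> k\<close> unfolding v U_def by simp
  ultimately show ?thesis by blast
qed

lemma runs_BWT_de_bruijn_ge:
  assumes "finite \<Sigma>" and db: "de_bruijn_cycle \<Sigma> k D" and "1 \<le> k" and "k \<le> length D"
    and v: "v = map Some (rotate m D @ take (k - 1) (rotate m D)) @ [None]"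
  shows "card \<Sigma> ^ k + 1 \<le> runs (BWT v) + card \<Sigma> ^ (k - 1)"
proof -
  define Y where "Y = {y. set y \<subseteq> \<Sigma> \<and> length y = k - 1}"
  define A where "A = (\<lambda>(y, a). (map Some y, Some a)) ` (Y \<times> \<Sigma>)"
  have "A \<subseteq> (\<lambda>i. (take (k - 1) (rotate i v), last (rotate i v))) ` {..<length v}"
  proof
    fix z assume "z \<in> A"
    then obtain y a where z: "z = (map Some y, Some a)" and "y \<in> Y" and "a \<in> \<Sigma>"
      unfolding A_def by auto
    then obtain i where "i < length v"
      and "take (k - 1) (rotate i v) = map Some y" and "last (rotate i v) = Some a"
      using de_bruijn_context_in_BWT_rows[OF db assms(3,4) v] unfolding Y_def by blast
    then show "z \<in> (\<lambda>i. (take (k - 1) (rotate i v), last (rotate i v))) ` {..<length v}"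
      unfolding z by force
  qed
  moreover have "v \<noteq> []" using v by simp
  ultimately have runs_ge: "card A + 1 \<le> runs (BWT v) + card (fst ` A)"
    by (intro card_add_one_le_runs_BWT)
  have "card \<Sigma> ^ k = length D" using db unfolding de_bruijn_cycle_def by simp
  then have "\<Sigma> \<noteq> {}" using assms(3,4) by (auto simp: zero_power)
  then have "fst ` A = map Some ` Y" unfolding A_def by force
  moreover have "card (map Some ` Y) = card Y"
    by (rule card_image, rule inj_on_subset[OF list.inj_map[OF inj_Some] subset_UNIV])
  ultimately have card_fst: "card (fst ` A) = card \<Sigma> ^ (k - 1)"
    using card_lists_length_eq[OF assms(1)] unfolding Y_def by simp
  have "inj_on (\<lambda>(y, a). (map Some y, Some a)) (Y \<times> \<Sigma>)" by (auto simp: inj_on_def)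
  then have "card A = card Y * card \<Sigma>"
    unfolding A_def by (simp add: card_image card_cartesian_product)
  also have "\<dots> = card \<Sigma> ^ (k - 1) * card \<Sigma>"
    using card_lists_length_eq[OF assms(1)] unfolding Y_def by simp
  also have "\<dots> = card \<Sigma> ^ k" using assms(3) by (simp flip: power_Suc2)
  finally show ?thesis using runs_ge card_fst by simp
qed

lemma chi_le_card:
  assumes "suffixient v S"
  shows "chi v \<le> card S"
proof -
  have "{card S | S. suffixient v S} \<subseteq> {..length v}"
    using card_mono[of "{..<length v}"] by (auto simp: suffixient_def)
  then have "finite {card S | S. suffixient v S}" by (rule finite_subset) simp
  then show ?thesis unfolding chi_def using assms by (intro Min_le) auto
qed

lemma ex_suffix_take_if_sublist:
  assumes "sublist e v" and "e \<noteq> []"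
  shows "\<exists>j < length v. suffix e (take (Suc j) v)"
proof -
  obtain ps ss where v: "v = ps @ e @ ss" using assms(1) unfolding sublist_def by blast
  define j where "j = length ps + length e - 1"
  have "Suc j = length (ps @ e)" using assms(2) unfolding j_def by (cases e) auto
  then have "take (Suc j) v = ps @ e" and "j < length v" unfolding v by simp_all
  then show ?thesis by (auto simp: suffix_def)
qed

text \<open>A right-extension ending inside the repeated prefix also ends \<open>L\<close> positions later.\<close>

lemma suffixient_atLeastLessThan_if_prefix_repeats:
  assumes "take p (drop L v) = take p v" and "p \<le> L" and "L + p \<le> length v"
  shows "suffixient v {p..<length v}"
  unfolding suffixient_def
proof (intro conjI ballI)
  show "{p..<length v} \<subseteq> {..<length v}" by auto
next
  fix e assume "e \<in> right_extensions v"
  then have "sublist e v" and "e \<noteq> []" unfolding right_extensions_def by auto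
  then obtain j where j: "j < length v" "suffix e (take (Suc j) v)"
    using ex_suffix_take_if_sublist by blast
  show "\<exists>j' \<in> {p..<length v}. suffix e (take (Suc j') v)"
  proof (cases "p \<le> j")
    case True
    then show ?thesis using j by auto
  next
    case False
    have "take (Suc j) (drop L v) = take (Suc j) (take p (drop L v))" using False by simp
    also have "\<dots> = take (Suc j) v" using assms(1) False by simp
    finally have "take (Suc j) (drop L v) = take (Suc j) v" .
    then have "take (L + Suc j) v = take L v @ take (Suc j) v" by (simp only: take_add)
    then have "suffix e (take (Suc (L + j)) v)"
      using j(2) by (simp add: suffix_appendI)
    moreover have "L + j \<in> {p..<length v}" using False assms(2,3) by auto
    ultimately show ?thesis by blast
  qed
qed

lemma chi_linearization_le:
  assumes "k - 1 \<le> length U"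
  shows "chi (map Some (U @ take (k - 1) U) @ [None]) \<le> length U + 1"
proof -
  let ?v = "map Some (U @ take (k - 1) U) @ [None]"
  have "suffixient ?v {k - 1..<length ?v}"
    using assms by (intro suffixient_atLeastLessThan_if_prefix_repeats) (auto simp: take_map)
  then show ?thesis using chi_le_card[of ?v] assms by fastforce
qed

lemma ratio_lt_of_bounds:
  fixes \<sigma> P c r :: nat
  assumes "2 \<le> \<sigma>" and "c \<le> \<sigma> * P + 1" and "\<sigma> * P + 1 \<le> r + P"
  shows "real c / real r < real \<sigma> / (real \<sigma> - 1)"
proof -
  define s where "s = real \<sigma>"
  have s: "2 \<le> s" using assms(1) unfolding s_def by simp
  have c: "real c \<le> s * P + 1" and r: "s * P + 1 \<le> real r + P"
    using assms(2,3) unfolding s_def by (metis of_nat_1 of_nat_add of_nat_le_iff of_nat_mult)+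
  have "real c * (s - 1) \<le> (s * P + 1) * (s - 1)" using c s by (intro mult_right_mono) auto
  also have "\<dots> < s * ((s - 1) * P + 1)" by (simp add: algebra_simps)
  also have "\<dots> \<le> s * real r" using r s by (intro mult_left_mono) (auto simp: algebra_simps)
  finally have "real c * (s - 1) < s * real r" .
  moreover have "P \<le> \<sigma> * P" using assms(1) by simp
  then have "0 < r" using assms(3) by linarith
  then have "real r > 0" by simp
  ultimately show ?thesis using s unfolding s_def by (simp add: field_simps)
qed

theorem theorem4:
  fixes \<Sigma> :: "'a::linorder set" and \<sigma> k m :: nat and D U :: "'a list"
  assumes "finite \<Sigma>" and "card \<Sigma> = \<sigma>" and "\<sigma> \<ge> 2" and "k \<ge> 1"
    and "de_bruijn_cycle \<Sigma> k D"
    and "U = rotate m D"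
  shows "let w_lin = U @ take (k - 1) U;
             v = map Some w_lin @ [None]
         in real (chi v) / real (runs (BWT v)) < real \<sigma> / (real \<sigma> - 1)"
proof -
  define v where "v = map Some (U @ take (k - 1) U) @ [None]"
  have length_D: "length D = \<sigma> ^ k" using assms(2,5) unfolding de_bruijn_cycle_def by simp
  have "k < 2 ^ k" by (rule less_exp)
  also have "(2::nat) ^ k \<le> \<sigma> ^ k" using assms(3) by (rule power_mono) simp
  finally have k_le: "k \<le> length D" using length_D by simp
  have power_k: "\<sigma> ^ k = \<sigma> * \<sigma> ^ (k - 1)" using assms(4) by (simp flip: power_Suc)
  have "chi v \<le> \<sigma> * \<sigma> ^ (k - 1) + 1"
    using chi_linearization_le[of k U] k_le length_D power_k assms(6) unfolding v_def by simp
  moreover have "\<sigma> * \<sigma> ^ (k - 1) + 1 \<le> runs (BWT v) + \<sigma> ^ (k - 1)"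
    using runs_BWT_de_bruijn_ge[OF assms(1,5,4) k_le] assms(2,6) power_k
    unfolding v_def by simp
  ultimately show ?thesis
    unfolding Let_def v_def[symmetric] by (rule ratio_lt_of_bounds[OF assms(3)])
qed

end
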